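(* Let $F,G\in 1+x\,\mathbb Z[[x]]$ be formal power series whose coefficients are congruent modulo $4$ (coefficient by coefficient). If there exists $H\in 1+x\,\mathbb Z[[x]]$ with $H^2=F$, then there exists $H'\in 1+x\,\mathbb Z[[x]]$ with $H'^2=G$. *)

theory Defs
  imports "HOL-Computational_Algebra.Formal_Power_Series" "HOL-Number_Theory.Cong"
begin

end

theory Submission
  imports Defs
begin

unbundle fps_syntax

text \<open>Write \<open>G = F + 4 K\<close> with \<open>K(0) = 0\<close> and look for a square root of \<open>G\<close> of the form
  \<open>H + 2 D\<close>, where \<open>H\<^sup>2 = F\<close>. Since \<open>(H + 2 D)\<^sup>2 = H\<^sup>2 + 4 D (H + D)\<close>, it suffices to solve
  \<open>D (H + D) = K\<close>. Because \<open>H(0) = 1\<close> and \<open>D(0) = 0\<close>, the \<open>n\<close>-th coefficient of \<open>D (H + D)\<close>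
  is \<open>d\<^sub>n\<close> plus terms involving only \<open>d\<^sub>1, \<dots>, d\<^sub>n\<^sub>-\<^sub>1\<close>, so this equation can be solved
  coefficient by coefficient over any commutative ring.\<close>

function quad_root_coeff :: "'a::comm_ring_1 fps \<Rightarrow> 'a fps \<Rightarrow> nat \<Rightarrow> 'a" where
  "quad_root_coeff H K n = (if n = 0 then 0 else
     K $ n - (\<Sum>i\<in>{1..<n}. quad_root_coeff H K i * (H $ (n - i) + quad_root_coeff H K (n - i))))"
  by auto
termination by (relation "measure (\<lambda>(H, K, n). n)") auto

declare quad_root_coeff.simps [simp del]

definition quad_root :: "'a::comm_ring_1 fps \<Rightarrow> 'a fps \<Rightarrow> 'a fps" where
  "quad_root H K = Abs_fps (quad_root_coeff H K)"

lemma quad_root_nth_0 [simp]: "quad_root H K $ 0 = 0"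
  by (simp add: quad_root_def quad_root_coeff.simps)

lemma quad_root_nth:
  assumes "n > 0"
  shows "quad_root H K $ n =
    K $ n - (\<Sum>i\<in>{1..<n}. quad_root H K $ i * (H $ (n - i) + quad_root H K $ (n - i)))"
  using assms by (simp add: quad_root_def quad_root_coeff.simps [of H K n])

lemma quad_root_eq:
  fixes H K :: "'a::comm_ring_1 fps"
  assumes H0: "H $ 0 = 1" and K0: "K $ 0 = 0"
  shows "quad_root H K * (H + quad_root H K) = K"
proof (rule fps_ext)
  fix n
  let ?D = "quad_root H K"
  let ?t = "\<lambda>i. ?D $ i * (H $ (n - i) + ?D $ (n - i))"
  show "(?D * (H + ?D)) $ n = K $ n"
  proof (cases "n = 0")
    case True
    with K0 show ?thesis by simp
  next
    case False
    have "(?D * (H + ?D)) $ n = (\<Sum>i=0..n. ?t i)"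
      by (simp add: fps_mult_nth)
    also have "\<dots> = (\<Sum>i\<in>insert 0 (insert n {1..<n}). ?t i)"
      using False by (intro sum.cong) auto
    also have "\<dots> = ?D $ n + (\<Sum>i\<in>{1..<n}. ?t i)"
      using False H0 by simp
    also have "\<dots> = K $ n"
      using False by (subst (1) quad_root_nth) simp_all
    finally show ?thesis .
  qed
qed

lemma fps_square_add_four_mult_is_square:
  fixes H K :: "'a::comm_ring_1 fps"
  assumes "H $ 0 = 1" and "K $ 0 = 0"
  shows "\<exists>H'. H' $ 0 = 1 \<and> H' ^ 2 = H ^ 2 + 4 * K"
proof (intro exI conjI)
  let ?D = "quad_root H K"
  show "(H + 2 * ?D) $ 0 = 1"
    using assms(1) by (simp add: numeral_fps_const)
  have "(H + 2 * ?D) ^ 2 = H ^ 2 + 4 * (?D * (H + ?D))"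
    by (simp add: power2_eq_square algebra_simps)
  then show "(H + 2 * ?D) ^ 2 = H ^ 2 + 4 * K"
    using quad_root_eq [OF assms] by simp
qed

lemma fps_coeffwise_cong_imp_eq_add_mult:
  fixes F G :: "int fps"
  assumes "\<And>n. [F $ n = G $ n] (mod m)"
  shows "G = F + fps_const m * Abs_fps (\<lambda>n. (G $ n - F $ n) div m)"
proof (rule fps_ext)
  fix n
  have "m dvd G $ n - F $ n"
    using assms [of n] by (simp add: cong_iff_dvd_diff dvd_diff_commute)
  then show "G $ n = (F + fps_const m * Abs_fps (\<lambda>n. (G $ n - F $ n) div m)) $ n"
    by simp
qed

theorem proposition4p2:
  fixes F G :: "int fps"
  assumes "fps_nth F 0 = 1" and "fps_nth G 0 = 1"
    and "\<And>n. [fps_nth F n = fps_nth G n] (mod 4)"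
    and "\<exists>H :: int fps. fps_nth H 0 = 1 \<and> H ^ 2 = F"
  shows "\<exists>H' :: int fps. fps_nth H' 0 = 1 \<and> H' ^ 2 = G"
proof -
  obtain H where H: "H $ 0 = 1" "H ^ 2 = F"
    using assms(4) by blast
  define K where "K = Abs_fps (\<lambda>n. (G $ n - F $ n) div 4)"
  have "G = F + 4 * K"
    using fps_coeffwise_cong_imp_eq_add_mult [OF assms(3)]
    by (simp add: K_def numeral_fps_const)
  moreover have "K $ 0 = 0"
    using assms(1,2) by (simp add: K_def)
  ultimately show ?thesis
    using fps_square_add_four_mult_is_square [OF H(1)] H(2) by simp
qed

end
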